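(* (i) A legal abstract path has weight $2$ if and only if it has the form Ia or the form Ib, where: form Ia means it consists of exactly two nodes, both interior, joined by one arrow; form Ib means it has exactly one boundary node $v$ and every other node is an interior node adjacent to $v$. (ii) A boundary abstract path has length $2$ if and only if it has the form II, i.e. consists of exactly two boundary nodes joined by one arrow.
   Context: $\mathbb F=\{0,1\}$, $\mathbb N=\{0,1,2,\dots\}$. Abstract vertex types: $o$ (interior), $u$ (unstable), $s$ (stable). An abstract edge is $\varepsilon=(\mu,(o_1,u_1,s_1),(o_2,u_2,s_2))\in\mathbb F\times\mathbb N^3\times\mathbb N^3$ with: if $\mu=0$ then $s_1=u_2=0$; if $\mu=1$ then $o_1=o_2=0$ (interior if $\mu=0$, boundary if $\mu=1$). Weight: $w(\varepsilon)=1$ if $\mu=0$, $2-s_1-u_2$ if $\mu=1$. An abstract path $\tau=(T,\tau,\sigma)$: a non-empty finite directed tree $T=(V,E)$ (nodes, arrows), $\tau:V\to$ abstract edges, $\sigma:E\to\{o,u,s\}$, such that for each node $v$ and type $X$, $X_1(v)\ge|\{e:t(e)=v,\sigma(e)=X\}|$ and $X_2(v)\ge|\{e:s(e)=v,\sigma(e)=X\}|$, with $X_i(v)$ the entries of $\tau(v)$. Ends: $X_1(\tau)=\sum_vX_1(v)-|\sigma^{-1}(X)|$, $X_2(\tau)=\sum_vX_2(v)-|\sigma^{-1}(X)|$. A node is interior or boundary according to $\mu(v)$. $\tau$ is legal if $s_1(\tau)=u_2(\tau)=0$; it is a boundary path if all nodes are boundary. Length = number of nodes; weight $w(\tau)=\sum_vw(\tau(v))$.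 *)

theory Defs
  imports Main
begin

text \<open>Abstract vertex types: o (interior), u (unstable), s (stable).\<close>
datatype vtype = TyO | TyU | TyS

text \<open>Abstract edge (mu, (o1,u1,s1), (o2,u2,s2)); mu = 1 is encoded as amu = True.\<close>
record aedge =
  amu :: bool
  ao1 :: nat
  au1 :: nat
  as1 :: nat
  ao2 :: nat
  au2 :: nat
  as2 :: nat

definition valid_aedge :: "aedge \<Rightarrow> bool" where
  "valid_aedge \<epsilon> \<longleftrightarrow>
     (\<not> amu \<epsilon> \<longrightarrow> as1 \<epsilon> = 0 \<and> au2 \<epsilon> = 0) \<and>
     (amu \<epsilon> \<longrightarrow> ao1 \<epsilon> = 0 \<and> ao2 \<epsilon> = 0)"

definition aedge_weight :: "aedge \<Rightarrow> int" where
  "aedge_weight \<epsilon> = (if amu \<epsilon> then 2 - int (as1 \<epsilon>) - int (au2 \<epsilon>) else 1)"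

fun X1 :: "aedge \<Rightarrow> vtype \<Rightarrow> nat" where
  "X1 \<epsilon> TyO = ao1 \<epsilon>" | "X1 \<epsilon> TyU = au1 \<epsilon>" | "X1 \<epsilon> TyS = as1 \<epsilon>"

fun X2 :: "aedge \<Rightarrow> vtype \<Rightarrow> nat" where
  "X2 \<epsilon> TyO = ao2 \<epsilon>" | "X2 \<epsilon> TyU = au2 \<epsilon>" | "X2 \<epsilon> TyS = as2 \<epsilon>"

definition is_dtree :: "'v set \<Rightarrow> ('v \<times> 'v) set \<Rightarrow> bool" where
  "is_dtree V E \<longleftrightarrow>
     finite V \<and> V \<noteq> {} \<and> E \<subseteq> V \<times> V \<and>
     (\<forall>(a,b)\<in>E. a \<noteq> b \<and> (b,a) \<notin> E) \<and>
     (\<forall>a\<in>V. \<forall>b\<in>V. (a,b) \<in> (E \<union> E\<inverse>)\<^sup>*) \<and>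
     card E + 1 = card V"

definition abstract_path ::
  "'v set \<Rightarrow> ('v \<times> 'v) set \<Rightarrow> ('v \<Rightarrow> aedge) \<Rightarrow> ('v \<times> 'v \<Rightarrow> vtype) \<Rightarrow> bool" where
  "abstract_path V E \<tau> \<sigma> \<longleftrightarrow>
     is_dtree V E \<and>
     (\<forall>v\<in>V. valid_aedge (\<tau> v)) \<and>
     (\<forall>v\<in>V. \<forall>X. X1 (\<tau> v) X \<ge> card {e\<in>E. snd e = v \<and> \<sigma> e = X} \<and>
                 X2 (\<tau> v) X \<ge> card {e\<in>E. fst e = v \<and> \<sigma> e = X})"

definition path_end1 :: "'v set \<Rightarrow> ('v \<times> 'v) set \<Rightarrow> ('v \<Rightarrow> aedge) \<Rightarrow> ('v \<times> 'v \<Rightarrow> vtype) \<Rightarrow> vtype \<Rightarrow> int" where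
  "path_end1 V E \<tau> \<sigma> X = int (\<Sum>v\<in>V. X1 (\<tau> v) X) - int (card {e\<in>E. \<sigma> e = X})"

definition path_end2 :: "'v set \<Rightarrow> ('v \<times> 'v) set \<Rightarrow> ('v \<Rightarrow> aedge) \<Rightarrow> ('v \<times> 'v \<Rightarrow> vtype) \<Rightarrow> vtype \<Rightarrow> int" where
  "path_end2 V E \<tau> \<sigma> X = int (\<Sum>v\<in>V. X2 (\<tau> v) X) - int (card {e\<in>E. \<sigma> e = X})"

definition legal_path :: "'v set \<Rightarrow> ('v \<times> 'v) set \<Rightarrow> ('v \<Rightarrow> aedge) \<Rightarrow> ('v \<times> 'v \<Rightarrow> vtype) \<Rightarrow> bool" where
  "legal_path V E \<tau> \<sigma> \<longleftrightarrow> path_end1 V E \<tau> \<sigma> TyS = 0 \<and> path_end2 V E \<tau> \<sigma> TyU = 0"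

definition boundary_path :: "'v set \<Rightarrow> ('v \<Rightarrow> aedge) \<Rightarrow> bool" where
  "boundary_path V \<tau> \<longleftrightarrow> (\<forall>v\<in>V. amu (\<tau> v))"

definition path_weight :: "'v set \<Rightarrow> ('v \<Rightarrow> aedge) \<Rightarrow> int" where
  "path_weight V \<tau> = (\<Sum>v\<in>V. aedge_weight (\<tau> v))"

definition path_length :: "'v set \<Rightarrow> nat" where
  "path_length V = card V"

definition form_Ia :: "'v set \<Rightarrow> ('v \<times> 'v) set \<Rightarrow> ('v \<Rightarrow> aedge) \<Rightarrow> bool" where
  "form_Ia V E \<tau> \<longleftrightarrow> (\<exists>a b. a \<noteq> b \<and> V = {a, b} \<and> E = {(a, b)} \<and>
                              \<not> amu (\<tau> a) \<and> \<not> amu (\<tau> b))"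

definition form_Ib :: "'v set \<Rightarrow> ('v \<times> 'v) set \<Rightarrow> ('v \<Rightarrow> aedge) \<Rightarrow> bool" where
  "form_Ib V E \<tau> \<longleftrightarrow> (\<exists>v\<in>V. amu (\<tau> v) \<and>
      (\<forall>w\<in>V - {v}. \<not> amu (\<tau> w) \<and> ((v, w) \<in> E \<or> (w, v) \<in> E)))"

definition form_II :: "'v set \<Rightarrow> ('v \<times> 'v) set \<Rightarrow> ('v \<Rightarrow> aedge) \<Rightarrow> bool" where
  "form_II V E \<tau> \<longleftrightarrow> (\<exists>a b. a \<noteq> b \<and> V = {a, b} \<and> E = {(a, b)} \<and>
                              amu (\<tau> a) \<and> amu (\<tau> b))"

end

theory Submission
  imports Defs
begin

text \<open>Write \<open>B\<close> for the boundary nodes and \<open>E\<^sub>o\<close> for the arrows joining two interior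
  nodes. Interior edges have no \<open>s\<close>-entry on their first side and no \<open>u\<close>-entry on their
  second, boundary edges no \<open>o\<close>-entries, so an arrow is of type \<open>o\<close> exactly when both
  its ends are interior.
  For a legal path the unstable and stable ends are all used by arrows, so
  \<open>w = |V| + |B| - |E\<^sub>u| - |E\<^sub>s| = |B| + 1 + |E\<^sub>o|\<close> using \<open>|E| = |V| - 1\<close>. Weight 2 thus
  means \<open>|B| = 0, |E\<^sub>o| = 1\<close> (form Ia) or \<open>|B| = 1, E\<^sub>o = {}\<close>, and in a tree the latter
  says that every arrow touches the unique boundary node, i.e. the tree is a star
  around it (form Ib). Part (ii) is the fact that a tree with two nodes has one arrow.\<close>

definition boundary_nodes :: "'v set \<Rightarrow> ('v \<Rightarrow> aedge) \<Rightarrow> 'v set" where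
  "boundary_nodes V \<tau> = {v\<in>V. amu (\<tau> v)}"

definition interior_arrows :: "('v \<times> 'v) set \<Rightarrow> ('v \<Rightarrow> aedge) \<Rightarrow> ('v \<times> 'v) set" where
  "interior_arrows E \<tau> = {e\<in>E. \<not> amu (\<tau> (fst e)) \<and> \<not> amu (\<tau> (snd e))}"

lemma is_dtree_finite_arrows: "is_dtree V E \<Longrightarrow> finite E"
  unfolding is_dtree_def by (meson finite_SigmaI finite_subset)

lemma is_dtree_single_arrow:
  assumes "is_dtree V E" and "card E = 1"
  obtains a b where "a \<noteq> b" "V = {a, b}" "E = {(a, b)}"
proof -
  obtain a b where E: "E = {(a, b)}" using \<open>card E = 1\<close> by (metis card_1_singletonE surj_pair)
  with assms have "a \<noteq> b" "{a, b} \<subseteq> V" "card V = 2" "finite V"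
    unfolding is_dtree_def by auto
  then have "V = {a, b}" by (metis card_2_iff card_subset_eq)
  then show thesis using E \<open>a \<noteq> b\<close> that by blast
qed

text \<open>In a tree, a node touches all arrows iff it is adjacent to all other nodes:
  the arrows towards the other nodes are already \<open>|V| - 1 = |E|\<close> many.\<close>
lemma is_dtree_star_iff:
  assumes tree: "is_dtree V E" and "v \<in> V"
  shows "(\<forall>(a, b)\<in>E. a = v \<or> b = v) \<longleftrightarrow> (\<forall>w\<in>V - {v}. (v, w) \<in> E \<or> (w, v) \<in> E)"
proof
  assume touch: "\<forall>(a, b)\<in>E. a = v \<or> b = v"
  show "\<forall>w\<in>V - {v}. (v, w) \<in> E \<or> (w, v) \<in> E"
  proof
    fix w assume w: "w \<in> V - {v}"
    then have "(w, v) \<in> (E \<union> E\<inverse>)\<^sup>*" using tree \<open>v \<in> V\<close> unfolding is_dtree_def by blast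
    then obtain y where "(w, y) \<in> E \<union> E\<inverse>" using w by (metis DiffD2 converse_rtranclE singletonI)
    with touch w show "(v, w) \<in> E \<or> (w, v) \<in> E" by auto
  qed
next
  assume adj: "\<forall>w\<in>V - {v}. (v, w) \<in> E \<or> (w, v) \<in> E"
  define arrow where "arrow w = (if (v, w) \<in> E then (v, w) else (w, v))" for w
  have "inj_on arrow (V - {v})" unfolding inj_on_def arrow_def by auto
  moreover have "card E + 1 = card V" "finite V" using tree unfolding is_dtree_def by auto
  ultimately have "card (arrow ` (V - {v})) = card E"
    using \<open>v \<in> V\<close> by (simp add: card_image)
  moreover have "arrow ` (V - {v}) \<subseteq> E" using adj unfolding arrow_def by auto
  ultimately have "arrow ` (V - {v}) = E"
    using is_dtree_finite_arrows[OF tree] by (simp add: card_subset_eq)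
  then show "\<forall>(a, b)\<in>E. a = v \<or> b = v" unfolding arrow_def by auto
qed

lemma form_Ia_iff:
  assumes "is_dtree V E"
  shows "form_Ia V E \<tau> \<longleftrightarrow> boundary_nodes V \<tau> = {} \<and> card (interior_arrows E \<tau>) = 1"
proof
  assume "form_Ia V E \<tau>"
  then obtain a b where "V = {a, b}" "E = {(a, b)}" "\<not> amu (\<tau> a)" "\<not> amu (\<tau> b)"
    unfolding form_Ia_def by blast
  then have "boundary_nodes V \<tau> = {}" "interior_arrows E \<tau> = {(a, b)}"
    unfolding boundary_nodes_def interior_arrows_def by auto
  then show "boundary_nodes V \<tau> = {} \<and> card (interior_arrows E \<tau>) = 1" by simp
next
  assume B_Eo: "boundary_nodes V \<tau> = {} \<and> card (interior_arrows E \<tau>) = 1"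
  then have interior: "\<forall>v\<in>V. \<not> amu (\<tau> v)" unfolding boundary_nodes_def by auto
  moreover have "E \<subseteq> V \<times> V" using assms unfolding is_dtree_def by simp
  ultimately have "interior_arrows E \<tau> = E" unfolding interior_arrows_def by auto
  with B_Eo have "card E = 1" by simp
  with assms interior show "form_Ia V E \<tau>"
    unfolding form_Ia_def by (elim is_dtree_single_arrow) auto
qed

lemma form_Ib_iff:
  assumes tree: "is_dtree V E"
  shows "form_Ib V E \<tau> \<longleftrightarrow> card (boundary_nodes V \<tau>) = 1 \<and> interior_arrows E \<tau> = {}"
proof
  assume "form_Ib V E \<tau>"
  then obtain v where v: "v \<in> V" "amu (\<tau> v)"
    and others: "\<forall>w\<in>V - {v}. \<not> amu (\<tau> w) \<and> ((v, w) \<in> E \<or> (w, v) \<in> E)"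
    unfolding form_Ib_def by blast
  then have "boundary_nodes V \<tau> = {v}" unfolding boundary_nodes_def by auto
  moreover have "\<forall>(a, b)\<in>E. a = v \<or> b = v" using is_dtree_star_iff[OF tree v(1)] others by blast
  ultimately show "card (boundary_nodes V \<tau>) = 1 \<and> interior_arrows E \<tau> = {}"
    using v(2) unfolding interior_arrows_def by auto
next
  assume "card (boundary_nodes V \<tau>) = 1 \<and> interior_arrows E \<tau> = {}"
  then obtain v where B: "boundary_nodes V \<tau> = {v}" and Eo: "interior_arrows E \<tau> = {}"
    using card_1_singletonE by blast
  then have v: "v \<in> V" "amu (\<tau> v)" and interior: "\<forall>w\<in>V - {v}. \<not> amu (\<tau> w)"
    unfolding boundary_nodes_def by auto
  have "E \<subseteq> V \<times> V" using tree unfolding is_dtree_def by simp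
  then have "\<forall>(a, b)\<in>E. a = v \<or> b = v"
    using Eo interior unfolding interior_arrows_def by fastforce
  then show "form_Ib V E \<tau>"
    using is_dtree_star_iff[OF tree v(1)] v interior unfolding form_Ib_def by blast
qed

lemma abstract_path_arrow_capacity:
  assumes "abstract_path V E \<tau> \<sigma>" and "(a, b) \<in> E"
  shows "X2 (\<tau> a) (\<sigma> (a, b)) \<ge> 1" "X1 (\<tau> b) (\<sigma> (a, b)) \<ge> 1"
proof -
  have fin: "finite E" and ab: "a \<in> V" "b \<in> V"
    using assms is_dtree_finite_arrows unfolding abstract_path_def is_dtree_def by auto
  have "1 \<le> card {e\<in>E. fst e = a \<and> \<sigma> e = \<sigma> (a, b)}"
    using fin assms(2) by (auto simp: Suc_le_eq card_gt_0_iff)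
  also have "\<dots> \<le> X2 (\<tau> a) (\<sigma> (a, b))" using assms(1) ab unfolding abstract_path_def by blast
  finally show "X2 (\<tau> a) (\<sigma> (a, b)) \<ge> 1" .
  have "1 \<le> card {e\<in>E. snd e = b \<and> \<sigma> e = \<sigma> (a, b)}"
    using fin assms(2) by (auto simp: Suc_le_eq card_gt_0_iff)
  also have "\<dots> \<le> X1 (\<tau> b) (\<sigma> (a, b))" using assms(1) ab unfolding abstract_path_def by blast
  finally show "X1 (\<tau> b) (\<sigma> (a, b)) \<ge> 1" .
qed

lemma abstract_path_arrow_type_o_iff:
  assumes ap: "abstract_path V E \<tau> \<sigma>" and e: "e \<in> E"
  shows "\<sigma> e = TyO \<longleftrightarrow> \<not> amu (\<tau> (fst e)) \<and> \<not> amu (\<tau> (snd e))"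
proof -
  obtain a b where ab: "e = (a, b)" by fastforce
  have "a \<in> V" "b \<in> V" using ap e ab unfolding abstract_path_def is_dtree_def by auto
  then have "valid_aedge (\<tau> a)" "valid_aedge (\<tau> b)" using ap unfolding abstract_path_def by auto
  moreover note abstract_path_arrow_capacity[OF ap e[unfolded ab]]
  ultimately show ?thesis unfolding ab valid_aedge_def by (cases "\<sigma> (a, b)") auto
qed

lemma card_arrows_by_type:
  assumes "finite E"
  shows "card E = card {e\<in>E. \<sigma> e = TyO} + card {e\<in>E. \<sigma> e = TyU} + card {e\<in>E. \<sigma> e = TyS}"
proof -
  have "E = {e\<in>E. \<sigma> e = TyO} \<union> {e\<in>E. \<sigma> e = TyU} \<union> {e\<in>E. \<sigma> e = TyS}"
    by (auto intro: vtype.exhaust)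
  also have "card \<dots> = card {e\<in>E. \<sigma> e = TyO} + card {e\<in>E. \<sigma> e = TyU} + card {e\<in>E. \<sigma> e = TyS}"
    using assms by (simp add: card_Un_disjoint disjoint_iff)
  finally show ?thesis .
qed

lemma aedge_weight_valid:
  "valid_aedge \<epsilon> \<Longrightarrow>
     aedge_weight \<epsilon> = 1 + of_bool (amu \<epsilon>) - int (as1 \<epsilon>) - int (au2 \<epsilon>)"
  unfolding aedge_weight_def valid_aedge_def by auto

lemma legal_path_weight:
  assumes ap: "abstract_path V E \<tau> \<sigma>" and legal: "legal_path V E \<tau> \<sigma>"
  shows "path_weight V \<tau> = int (card (boundary_nodes V \<tau>)) + 1 + int (card (interior_arrows E \<tau>))"
proof -
  have tree: "is_dtree V E" and fin: "finite V" "finite E"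
    using ap is_dtree_finite_arrows unfolding abstract_path_def is_dtree_def by auto
  have "path_weight V \<tau> =
      (\<Sum>v\<in>V. 1 + of_bool (amu (\<tau> v)) - int (as1 (\<tau> v)) - int (au2 (\<tau> v)))"
    unfolding path_weight_def
    using ap by (intro sum.cong) (auto simp: abstract_path_def aedge_weight_valid)
  also have "\<dots> = int (card V) + int (card (boundary_nodes V \<tau>))
      - int (\<Sum>v\<in>V. as1 (\<tau> v)) - int (\<Sum>v\<in>V. au2 (\<tau> v))"
    using fin by (simp add: sum_subtractf sum.distrib boundary_nodes_def Int_def)
  also have "int (\<Sum>v\<in>V. as1 (\<tau> v)) = int (card {e\<in>E. \<sigma> e = TyS})"
    using legal unfolding legal_path_def path_end1_def by simp
  also have "int (\<Sum>v\<in>V. au2 (\<tau> v)) = int (card {e\<in>E. \<sigma> e = TyU})"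
    using legal unfolding legal_path_def path_end2_def by simp
  finally have "path_weight V \<tau> = int (card V) + int (card (boundary_nodes V \<tau>))
      - int (card {e\<in>E. \<sigma> e = TyS}) - int (card {e\<in>E. \<sigma> e = TyU})" .
  moreover have "{e\<in>E. \<sigma> e = TyO} = interior_arrows E \<tau>"
    using abstract_path_arrow_type_o_iff[OF ap] unfolding interior_arrows_def by blast
  moreover have "card E + 1 = card V" using tree unfolding is_dtree_def by simp
  ultimately show ?thesis using card_arrows_by_type[OF fin(2), of \<sigma>] by simp
qed

lemma legal_path_weight_2_iff:
  assumes ap: "abstract_path V E \<tau> \<sigma>" and legal: "legal_path V E \<tau> \<sigma>"
  shows "path_weight V \<tau> = 2 \<longleftrightarrow> form_Ia V E \<tau> \<or> form_Ib V E \<tau>"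
proof -
  have tree: "is_dtree V E" using ap unfolding abstract_path_def by simp
  then have "finite V" "finite E" using is_dtree_finite_arrows unfolding is_dtree_def by auto
  then have "finite (boundary_nodes V \<tau>)" "finite (interior_arrows E \<tau>)"
    unfolding boundary_nodes_def interior_arrows_def by auto
  moreover have "path_weight V \<tau> = 2 \<longleftrightarrow>
      card (boundary_nodes V \<tau>) = 0 \<and> card (interior_arrows E \<tau>) = 1 \<or>
      card (boundary_nodes V \<tau>) = 1 \<and> card (interior_arrows E \<tau>) = 0"
    unfolding legal_path_weight[OF ap legal] by linarith
  ultimately show ?thesis unfolding form_Ia_iff[OF tree] form_Ib_iff[OF tree] by simp
qed

lemma boundary_path_length_2_iff:
  assumes "is_dtree V E" and "boundary_path V \<tau>"
  shows "path_length V = 2 \<longleftrightarrow> form_II V E \<tau>"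
proof
  assume "path_length V = 2"
  then have "card E = 1" using assms(1) unfolding path_length_def is_dtree_def by simp
  with assms show "form_II V E \<tau>"
    unfolding form_II_def boundary_path_def by (elim is_dtree_single_arrow) auto
qed (auto simp: form_II_def path_length_def)

theorem corollary3p11:
  fixes V :: "'v set" and E :: "('v \<times> 'v) set" and \<tau> :: "'v \<Rightarrow> aedge"
    and \<sigma> :: "'v \<times> 'v \<Rightarrow> vtype"
  assumes "abstract_path V E \<tau> \<sigma>"
  shows "(legal_path V E \<tau> \<sigma> \<longrightarrow>
            (path_weight V \<tau> = 2 \<longleftrightarrow> form_Ia V E \<tau> \<or> form_Ib V E \<tau>)) \<and>
         (boundary_path V \<tau> \<longrightarrow>
            (path_length V = 2 \<longleftrightarrow> form_II V E \<tau>))"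
  using assms legal_path_weight_2_iff boundary_path_length_2_iff
  unfolding abstract_path_def by blast

end
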